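(* Let $\rho\colon\mathrm{Isom}(\mathbf H^1_{\mathbb C})_o\to\mathrm{Isom}(\mathbf H^\infty_{\mathbb C})_o$ be a non-elementary representation with $\ell(\rho)=t$. Then for every $\lambda>0$ and all $b,d\in\mathbb R$: (1) $K(\lambda b)=\lambda^tK(b)$; (2) $K(-b)=\overline{K(b)}$; (3) $K(b+d)=K(b)+K(d)+\langle c(d),c(-b)\rangle$.
   Context: $\mathcal H$: separable complex Hilbert space with strongly non-degenerate Hermitian form $B$ (linear in first variable) of signature $(1,\infty)$; $\mathbf H^\infty_{\mathbb C}=\{[v]:B(v,v)>0\}$, $\cosh d([v],[w])=|B(v,w)|/\sqrt{B(v,v)B(w,w)}$, boundary = isotropic lines, $\mathrm{Isom}(\mathbf H^\infty_{\mathbb C})_o=PU(B)$. $\mathbf H^1_{\mathbb C}$: $\mathbb C^2$ with $B(z,w)=z_1\bar w_1-z_2\bar w_2$, $\xi_{1,2}=(e_1\pm e_2)/\sqrt2$; $g(\lambda,b)\in SU(1,1)$ has matrix $\begin{pmatrix}\lambda&ib\\0&\lambda^{-1}\end{pmatrix}$ in basis $(\xi_1,\xi_2)$. Representations are orbitally continuous; non-elementary = no fixed point in $\mathbf H^\infty_{\mathbb C}\cup\partial\mathbf H^\infty_{\mathbb C}$ and no invariant pair of boundary points. For such $\rho$: $\eta_1$ = unique common fixed boundary point of the $\rho(g(\lambda,b))$, $\eta_2$ = other endpoint of the common axis of the hyperbolic $\rho(g(\lambda,0))$, $\lambda\ne1$; isotropic representatives with $B(\eta_1,\eta_2)=1$;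 $E=\eta_1^\perp\cap\eta_2^\perp$, $\langle u,v\rangle:=B(u,v)$ on $E$. The lift $T_b\in U(B)$ of $\rho(g(1,b))$ with $T_b\eta_1=\eta_1$ satisfies $T_b\eta_2=K(b)\eta_1+\eta_2+c(b)$, $K(b)\in\mathbb C$, $c(b)\in E$. $\ell(\rho)$ is the $t>0$ with $\inf_xd(\rho(g(\lambda,0))x,x)=t|\ln\lambda|$ for all $\lambda>0$. *)

theory Defs
  imports "HOL-Analysis.Analysis"
begin

text \<open>Concrete model of the separable complex Hilbert space with a strongly
non-degenerate Hermitian form of signature (1,infinity): square-summable
sequences v :: nat => complex, where coordinate 0 spans the positive line and
the remaining coordinates form l^2 with the negative of the standard inner product.\<close>

type_synonym hvec = "nat \<Rightarrow> complex"

definition Hsp :: "hvec set" where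
  "Hsp = {v. summable (\<lambda>n. (cmod (v n))^2)}"

definition Bf :: "hvec \<Rightarrow> hvec \<Rightarrow> complex" where
  "Bf v w = v 0 * cnj (w 0) - (\<Sum>n. v (Suc n) * cnj (w (Suc n)))"

definition sc :: "complex \<Rightarrow> hvec \<Rightarrow> hvec" where
  "sc a v = (\<lambda>n. a * v n)"

definition vadd :: "hvec \<Rightarrow> hvec \<Rightarrow> hvec" where
  "vadd u v = (\<lambda>n. u n + v n)"

definition zvec :: hvec where
  "zvec = (\<lambda>n. 0)"

definition UB :: "(hvec \<Rightarrow> hvec) set" where
  "UB = {T. bij_betw T Hsp Hsp
          \<and> (\<forall>u\<in>Hsp. \<forall>v\<in>Hsp. \<forall>a. T (vadd (sc a u) v) = vadd (sc a (T u)) (T v))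
          \<and> (\<forall>u\<in>Hsp. \<forall>v\<in>Hsp. Bf (T u) (T v) = Bf u v)}"

definition cline :: "hvec \<Rightarrow> hvec set" where
  "cline v = {w. \<exists>a. w = sc a v}"

definition hyp_pts :: "hvec set set" where
  "hyp_pts = {cline v | v. v \<in> Hsp \<and> Re (Bf v v) > 0}"

definition bd_pts :: "hvec set set" where
  "bd_pts = {cline v | v. v \<in> Hsp \<and> v \<noteq> zvec \<and> Bf v v = 0}"

definition rep :: "hvec set \<Rightarrow> hvec" where
  "rep x = (SOME v. v \<in> x \<and> v \<noteq> zvec)"

definition hdist :: "hvec set \<Rightarrow> hvec set \<Rightarrow> real" where
  "hdist x y = arcosh (cmod (Bf (rep x) (rep y))
                 / sqrt (Re (Bf (rep x) (rep x)) * Re (Bf (rep y) (rep y))))"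

text \<open>An element of PU(B) is represented by its action on the hyperbolic space;
T is a lift of f if it induces f.\<close>
definition induces :: "(hvec \<Rightarrow> hvec) \<Rightarrow> (hvec set \<Rightarrow> hvec set) \<Rightarrow> bool" where
  "induces T f \<longleftrightarrow> (\<forall>x\<in>hyp_pts. f x = T ` x)"

definition in_PU :: "(hvec set \<Rightarrow> hvec set) \<Rightarrow> bool" where
  "in_PU f \<longleftrightarrow> (\<exists>T\<in>UB. induces T f)"

definition fixes_bd :: "(hvec set \<Rightarrow> hvec set) \<Rightarrow> hvec set \<Rightarrow> bool" where
  "fixes_bd f xi \<longleftrightarrow> (\<exists>T\<in>UB. induces T f \<and> T ` xi = xi)"

definition B2 :: "complex^2 \<Rightarrow> complex^2 \<Rightarrow> complex" where
  "B2 z w = z$1 * cnj (w$1) - z$2 * cnj (w$2)"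

definition SU11 :: "(complex^2^2) set" where
  "SU11 = {A. det A = 1 \<and> (\<forall>z w. B2 (A *v z) (A *v w) = B2 z w)}"

text \<open>Basis change matrix with columns xi1 = (e1+e2)/sqrt 2, xi2 = (e1-e2)/sqrt 2.\<close>
definition Pxi :: "complex^2^2" where
  "Pxi = (\<chi> i j. if i = 2 \<and> j = 2 then - of_real (1 / sqrt 2) else of_real (1 / sqrt 2))"

text \<open>g(lambda,b) has matrix [[lambda, i b],[0, 1/lambda]] in the basis (xi1, xi2).\<close>
definition Mlb :: "real \<Rightarrow> real \<Rightarrow> complex^2^2" where
  "Mlb l b = (\<chi> i j. if i = 1 \<and> j = 1 then of_real l
                      else if i = 1 \<and> j = 2 then \<i> * of_real b
                      else if i = 2 \<and> j = 2 then of_real (1 / l) else 0)"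

definition gmat :: "real \<Rightarrow> real \<Rightarrow> complex^2^2" where
  "gmat l b = Pxi ** Mlb l b ** matrix_inv Pxi"

text \<open>Representations Isom(H^1_C)_o = PSU(1,1) -> PU(B), given as maps on SU(1,1)
that are trivial on -1, multiplicative, and orbitally continuous.\<close>
definition is_rep :: "(complex^2^2 \<Rightarrow> hvec set \<Rightarrow> hvec set) \<Rightarrow> bool" where
  "is_rep \<rho> \<longleftrightarrow>
     (\<forall>g\<in>SU11. in_PU (\<rho> g))
   \<and> (\<forall>g\<in>SU11. \<forall>h\<in>SU11. \<forall>x\<in>hyp_pts. \<rho> (g ** h) x = \<rho> g (\<rho> h x))
   \<and> (\<forall>x\<in>hyp_pts. \<rho> (- mat 1) x = x)
   \<and> (\<forall>x\<in>hyp_pts. \<forall>g\<in>SU11. \<forall>e>0. \<exists>d>0. \<forall>h\<in>SU11.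
          norm (h - g) < d \<longrightarrow> hdist (\<rho> h x) (\<rho> g x) < e)"

definition non_elementary :: "(complex^2^2 \<Rightarrow> hvec set \<Rightarrow> hvec set) \<Rightarrow> bool" where
  "non_elementary \<rho> \<longleftrightarrow>
     \<not> (\<exists>x\<in>hyp_pts. \<forall>g\<in>SU11. \<rho> g x = x)
   \<and> \<not> (\<exists>xi\<in>bd_pts. \<forall>g\<in>SU11. fixes_bd (\<rho> g) xi)
   \<and> \<not> (\<exists>xi1\<in>bd_pts. \<exists>xi2\<in>bd_pts. xi1 \<noteq> xi2 \<and>
          (\<forall>g\<in>SU11. \<exists>T\<in>UB. induces T (\<rho> g) \<and> (\<lambda>xi. T ` xi) ` {xi1, xi2} = {xi1, xi2}))"

definition displ :: "(hvec set \<Rightarrow> hvec set) \<Rightarrow> real" where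
  "displ f = (INF x\<in>hyp_pts. hdist (f x) x)"

definition ell_is :: "(complex^2^2 \<Rightarrow> hvec set \<Rightarrow> hvec set) \<Rightarrow> real \<Rightarrow> bool" where
  "ell_is \<rho> t \<longleftrightarrow> t > 0 \<and> (\<forall>l>0. displ (\<rho> (gmat l 0)) = t * \<bar>ln l\<bar>)"

text \<open>Real geodesic with endpoints [e1], [e2] (isotropic, B(e1,e2) = 1).\<close>
definition geod :: "hvec \<Rightarrow> hvec \<Rightarrow> hvec set set" where
  "geod e1 e2 = {cline (vadd (sc (of_real a) e1) e2) | a. a > 0}"

definition is_axis :: "hvec set set \<Rightarrow> (hvec set \<Rightarrow> hvec set) \<Rightarrow> bool" where
  "is_axis G f \<longleftrightarrow> displ f > 0 \<and> f ` G = G \<and> (\<forall>x\<in>G. hdist (f x) x = displ f)"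

definition Eperp :: "hvec \<Rightarrow> hvec \<Rightarrow> hvec set" where
  "Eperp e1 e2 = {v\<in>Hsp. Bf v e1 = 0 \<and> Bf v e2 = 0}"

end

theory Submission
  imports Defs
begin

text \<open>Lifts of isometries are unique up to a scalar, so the lifts \<open>T b\<close> of the unipotent
elements \<open>g(1,b)\<close>, normalised by \<open>T b \<eta>1 = \<eta>1\<close>, form a one-parameter group. Comparing
\<open>\<eta>2\<close>-coefficients in \<open>T (b + d) \<eta>2 = T b (T d \<eta>2)\<close> gives the cocycle identity (3), which
together with the isotropy of \<open>T b \<eta>2\<close> gives (2). For (1), a lift \<open>A\<close> of the diagonal element
\<open>g(\<mu>,0)\<close> fixes \<open>[\<eta>1]\<close> and preserves the axis, hence is diagonal: \<open>A \<eta>1 = p \<gamma> \<eta>1\<close>,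
\<open>A \<eta>2 = \<gamma> \<eta>2\<close> with \<open>p > 0\<close>. Conjugating \<open>T b\<close> by \<open>A\<close> gives \<open>K (\<mu>\<^sup>2 b) = p K b\<close>, and the
translation length of \<open>g(\<mu>,0)\<close> along the axis gives \<open>p = (\<mu>\<^sup>2) powr t\<close> or \<open>p = (\<mu>\<^sup>2) powr (- t)\<close>.
The second alternative forces \<open>K = 0\<close>, because orbital continuity makes \<open>K\<close> continuous at \<open>0\<close>.\<close>

section \<open>The Hermitian form\<close>

lemma summable_Bf_terms:
  assumes "u \<in> Hsp" "w \<in> Hsp"
  shows "summable (\<lambda>n. u (Suc n) * cnj (w (Suc n)))"
proof (rule summable_comparison_test')
  show "summable (\<lambda>n. ((cmod (u (Suc n)))^2 + (cmod (w (Suc n)))^2) / 2)"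
    using assms unfolding Hsp_def
    by (intro summable_divide summable_add) (simp_all add: summable_Suc_iff[where f = "\<lambda>n. (cmod (_ n))^2"])
  have "norm (x * cnj y) \<le> ((cmod x)^2 + (cmod y)^2) / 2" for x y
    using sum_squares_bound[of "cmod x" "cmod y"] by (simp add: norm_mult)
  then show "norm (u (Suc n) * cnj (w (Suc n))) \<le> ((cmod (u (Suc n)))^2 + (cmod (w (Suc n)))^2) / 2"
    for n .
qed

lemma zvec_Hsp: "zvec \<in> Hsp"
  by (simp add: Hsp_def zvec_def)

lemma vadd_Hsp:
  assumes "u \<in> Hsp" "v \<in> Hsp"
  shows "vadd u v \<in> Hsp"
  unfolding Hsp_def vadd_def
proof (rule CollectI, rule summable_comparison_test')
  show "summable (\<lambda>n. 2 * (cmod (u n))^2 + 2 * (cmod (v n))^2)"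
    using assms unfolding Hsp_def by (intro summable_add summable_mult) simp_all
  have "(cmod (u n + v n))^2 \<le> (cmod (u n) + cmod (v n))^2" for n
    by (simp add: power_mono norm_triangle_ineq)
  also have "\<dots> n \<le> 2 * (cmod (u n))^2 + 2 * (cmod (v n))^2" for n
    using sum_squares_bound[of "cmod (u n)" "cmod (v n)"] by (simp add: power2_sum)
  finally show "norm ((cmod (u n + v n))^2) \<le> 2 * (cmod (u n))^2 + 2 * (cmod (v n))^2" for n
    by simp
qed

lemma sc_Hsp: "u \<in> Hsp \<Longrightarrow> sc a u \<in> Hsp"
  unfolding Hsp_def sc_def
  by (simp add: norm_mult power_mult_distrib summable_mult)

lemma Bf_vadd_left:
  assumes "u \<in> Hsp" "v \<in> Hsp" "w \<in> Hsp"
  shows "Bf (vadd u v) w = Bf u w + Bf v w"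
proof -
  have "(\<Sum>n. (u (Suc n) + v (Suc n)) * cnj (w (Suc n))) =
        (\<Sum>n. u (Suc n) * cnj (w (Suc n))) + (\<Sum>n. v (Suc n) * cnj (w (Suc n)))"
    using suminf_add[OF summable_Bf_terms[OF assms(1,3)] summable_Bf_terms[OF assms(2,3)]]
    by (simp add: distrib_right)
  then show ?thesis
    unfolding Bf_def vadd_def by (simp add: algebra_simps)
qed

lemma Bf_sc_left:
  assumes "u \<in> Hsp" "w \<in> Hsp"
  shows "Bf (sc a u) w = a * Bf u w"
proof -
  have "(\<Sum>n. a * u (Suc n) * cnj (w (Suc n))) = a * (\<Sum>n. u (Suc n) * cnj (w (Suc n)))"
    using summable_Bf_terms[OF assms] by (subst suminf_mult[symmetric]) (auto simp: algebra_simps)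
  then show ?thesis
    unfolding Bf_def sc_def by (simp add: algebra_simps)
qed

lemma Bf_commute_cnj:
  assumes "u \<in> Hsp" "w \<in> Hsp"
  shows "Bf w u = cnj (Bf u w)"
proof -
  have "(\<lambda>n. cnj (u (Suc n) * cnj (w (Suc n)))) sums cnj (\<Sum>n. u (Suc n) * cnj (w (Suc n)))"
    using summable_sums[OF summable_Bf_terms[OF assms]] by (subst sums_cnj)
  then have "(\<Sum>n. w (Suc n) * cnj (u (Suc n))) = cnj (\<Sum>n. u (Suc n) * cnj (w (Suc n)))"
    by (simp add: mult.commute sums_iff)
  then show ?thesis
    unfolding Bf_def by (simp add: mult.commute)
qed

lemma Bf_vadd_right:
  assumes "u \<in> Hsp" "v \<in> Hsp" "w \<in> Hsp"
  shows "Bf w (vadd u v) = Bf w u + Bf w v"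
  using assms by (simp add: Bf_commute_cnj[of _ w] vadd_Hsp Bf_vadd_left)

lemma Bf_sc_right:
  assumes "u \<in> Hsp" "w \<in> Hsp"
  shows "Bf w (sc a u) = cnj a * Bf w u"
  using assms by (simp add: Bf_commute_cnj[of _ w] sc_Hsp Bf_sc_left)

lemmas Bf_linear = Bf_vadd_left Bf_vadd_right Bf_sc_left Bf_sc_right vadd_Hsp sc_Hsp

lemma Re_Bf_self_nonpos:
  assumes "w \<in> Hsp" "w 0 = 0"
  shows "Re (Bf w w) \<le> 0"
proof -
  have sums: "(\<lambda>n. Re (w (Suc n) * cnj (w (Suc n)))) sums Re (\<Sum>n. w (Suc n) * cnj (w (Suc n)))"
    using sums_Re[OF summable_sums[OF summable_Bf_terms[OF assms(1) assms(1)]]] .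
  have "0 \<le> (\<Sum>n. Re (w (Suc n) * cnj (w (Suc n))))"
    by (rule suminf_nonneg[OF sums_summable[OF sums]]) (simp add: complex_mult_cnj)
  then show ?thesis
    using sums_unique[OF sums] assms(2) unfolding Bf_def by simp
qed

text \<open>Otherwise the combination of \<open>c\<close> and \<open>v\<close> with vanishing coordinate 0 would be positive.\<close>

lemma Re_Bf_self_nonpos_if_orthogonal:
  assumes v: "v \<in> Hsp" "Re (Bf v v) > 0" and c: "c \<in> Hsp" "Bf c v = 0"
  shows "Re (Bf c c) \<le> 0"
proof (rule ccontr)
  assume "\<not> Re (Bf c c) \<le> 0"
  moreover have "v 0 \<noteq> 0"
    using Re_Bf_self_nonpos[OF v(1)] v(2) by fastforce
  ultimately have pos: "(cmod (v 0))^2 * Re (Bf c c) + (cmod (c 0))^2 * Re (Bf v v) > 0"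
    using v(2) by (simp add: add_pos_nonneg)
  let ?w = "vadd (sc (v 0) c) (sc (- c 0) v)"
  have "Bf v c = 0"
    using Bf_commute_cnj[OF c(1) v(1)] c(2) by simp
  then have "Bf ?w ?w = (v 0 * cnj (v 0)) * Bf c c + (c 0 * cnj (c 0)) * Bf v v"
    using v(1) c by (simp add: Bf_linear algebra_simps)
  also have "\<dots> = of_real ((cmod (v 0))^2) * Bf c c + of_real ((cmod (c 0))^2) * Bf v v"
    by (simp only: complex_norm_square)
  finally have "Re (Bf ?w ?w) > 0"
    using pos by simp
  moreover have "Re (Bf ?w ?w) \<le> 0"
    using v(1) c(1) by (intro Re_Bf_self_nonpos vadd_Hsp sc_Hsp) (simp_all add: vadd_def sc_def)
  ultimately show False
    by simp
qed

definition e0 :: hvec where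
  "e0 = (\<lambda>n. if n = 0 then 1 else 0)"

lemma e0_Hsp: "e0 \<in> Hsp"
proof -
  have "(\<lambda>n. (cmod (e0 n))^2) = (\<lambda>n. if n = 0 then 1 else 0)"
    by (auto simp: e0_def)
  moreover have "summable (\<lambda>n::nat. if n = 0 then (1::real) else 0)"
    using sums_single[of 0 "\<lambda>_. (1::real)"] by (simp add: sums_summable)
  ultimately show ?thesis
    unfolding Hsp_def by simp
qed

lemma Bf_e0_left: "Bf e0 u = cnj (u 0)"
  and Bf_e0_right: "Bf u e0 = u 0"
  by (simp_all add: Bf_def e0_def)

lemma Re_Bf_e0_perturbation:
  assumes "u \<in> Hsp"
  shows "Re (Bf (vadd e0 (sc (of_real \<epsilon>) u)) (vadd e0 (sc (of_real \<epsilon>) u)))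
       = 1 + 2 * \<epsilon> * Re (u 0) + \<epsilon>^2 * Re (Bf u u)"
proof -
  have "Bf (vadd e0 (sc (of_real \<epsilon>) u)) (vadd e0 (sc (of_real \<epsilon>) u))
      = 1 + of_real \<epsilon> * cnj (u 0) + of_real \<epsilon> * u 0 + of_real \<epsilon> * of_real \<epsilon> * Bf u u"
    using assms e0_Hsp
    by (simp add: Bf_linear Bf_e0_left Bf_e0_right) (simp add: e0_def vadd_def sc_def algebra_simps)
  then show ?thesis
    by (simp add: power2_eq_square)
qed

lemma Re_Bf_e0_perturbation_pos:
  assumes "u \<in> Hsp"
  obtains \<delta> where "\<delta> > 0"
    "\<And>\<epsilon>. 0 < \<epsilon> \<Longrightarrow> \<epsilon> < \<delta> \<Longrightarrow> Re (Bf (vadd e0 (sc (of_real \<epsilon>) u)) (vadd e0 (sc (of_real \<epsilon>) u))) > 0"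
proof -
  have "((\<lambda>\<epsilon>. 1 + 2 * \<epsilon> * Re (u 0) + \<epsilon>^2 * Re (Bf u u)) \<longlongrightarrow> 1) (at 0)"
    by (intro tendsto_eq_intros) auto
  then have "eventually (\<lambda>\<epsilon>. 1 + 2 * \<epsilon> * Re (u 0) + \<epsilon>^2 * Re (Bf u u) > 0) (at 0)"
    by (rule order_tendstoD) simp
  then obtain \<delta> where "\<delta> > 0"
    "\<And>\<epsilon>. \<epsilon> \<noteq> 0 \<Longrightarrow> dist \<epsilon> 0 < \<delta> \<Longrightarrow> 1 + 2 * \<epsilon> * Re (u 0) + \<epsilon>^2 * Re (Bf u u) > 0"
    unfolding eventually_at by auto
  then show ?thesis
    using that Re_Bf_e0_perturbation[OF assms] by simp
qed

section \<open>Unitary operators and complex lines\<close>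

lemma UB_Hsp: "T \<in> UB \<Longrightarrow> u \<in> Hsp \<Longrightarrow> T u \<in> Hsp"
  and UB_inj_on: "T \<in> UB \<Longrightarrow> inj_on T Hsp"
  and UB_Bf: "T \<in> UB \<Longrightarrow> u \<in> Hsp \<Longrightarrow> v \<in> Hsp \<Longrightarrow> Bf (T u) (T v) = Bf u v"
  and UB_linear: "T \<in> UB \<Longrightarrow> u \<in> Hsp \<Longrightarrow> v \<in> Hsp \<Longrightarrow> T (vadd (sc a u) v) = vadd (sc a (T u)) (T v)"
  unfolding UB_def bij_betw_def by auto

lemma vadd_zvec: "vadd u zvec = u"
  by (simp add: vadd_def zvec_def)

lemma sc_one: "sc 1 u = u"
  by (simp add: sc_def)

lemma sc_sc: "sc a (sc b v) = sc (a * b) v"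
  by (simp add: sc_def mult.assoc)

lemma sc_eq_zvec_iff: "sc a v = zvec \<longleftrightarrow> a = 0 \<or> v = zvec"
  by (auto simp: sc_def zvec_def fun_eq_iff)

lemma sc_cancel:
  assumes "sc a v = sc b v" "v \<noteq> zvec"
  shows "a = b"
proof -
  obtain n where "v n \<noteq> 0"
    using assms(2) by (auto simp: zvec_def fun_eq_iff)
  then show ?thesis
    using fun_cong[OF assms(1), of n] by (simp add: sc_def)
qed

lemma UB_zvec:
  assumes "T \<in> UB"
  shows "T zvec = zvec"
proof -
  have "T zvec = vadd (T zvec) (T zvec)"
    using UB_linear[OF assms zvec_Hsp zvec_Hsp, of 1] by (simp add: sc_one vadd_zvec)
  then show ?thesis
    by (simp add: fun_eq_iff vadd_def zvec_def)
qed

lemma UB_sc: "T \<in> UB \<Longrightarrow> u \<in> Hsp \<Longrightarrow> T (sc a u) = sc a (T u)"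
  using UB_linear[OF _ _ zvec_Hsp, of T u a] by (simp add: UB_zvec vadd_zvec)

lemma UB_vadd: "T \<in> UB \<Longrightarrow> u \<in> Hsp \<Longrightarrow> v \<in> Hsp \<Longrightarrow> T (vadd u v) = vadd (T u) (T v)"
  using UB_linear[of T u v 1] by (simp add: sc_one)

lemma UB_neq_zvec: "T \<in> UB \<Longrightarrow> v \<in> Hsp \<Longrightarrow> v \<noteq> zvec \<Longrightarrow> T v \<noteq> zvec"
  using UB_zvec UB_inj_on zvec_Hsp by (metis inj_on_def)

lemma UB_comp:
  assumes "T \<in> UB" "S \<in> UB"
  shows "T \<circ> S \<in> UB"
proof -
  have "bij_betw (T \<circ> S) Hsp Hsp"
    using assms unfolding UB_def by (auto intro: bij_betw_trans)
  moreover have "(T \<circ> S) (vadd (sc a u) v) = vadd (sc a ((T \<circ> S) u)) ((T \<circ> S) v)"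
    if "u \<in> Hsp" "v \<in> Hsp" for u v a
    using that assms by (simp add: UB_linear UB_Hsp)
  moreover have "Bf ((T \<circ> S) u) ((T \<circ> S) v) = Bf u v" if "u \<in> Hsp" "v \<in> Hsp" for u v
    using that assms by (simp add: UB_Bf UB_Hsp)
  ultimately show ?thesis
    unfolding UB_def by blast
qed

lemma self_in_cline: "v \<in> cline v"
  unfolding cline_def by (auto intro: exI[of _ 1] simp: sc_one)

lemma cline_eq_imp_sc: "cline w = cline v \<Longrightarrow> \<exists>s. w = sc s v"
  using self_in_cline[of w] unfolding cline_def by auto

lemma cline_sc: "a \<noteq> 0 \<Longrightarrow> cline (sc a v) = cline v"
proof
  show "cline (sc a v) \<subseteq> cline v"
    unfolding cline_def by (auto simp: sc_sc)
  assume "a \<noteq> 0"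
  then have "sc b v = sc (b / a) (sc a v)" for b
    by (simp add: sc_sc)
  then show "cline v \<subseteq> cline (sc a v)"
    unfolding cline_def by blast
qed

lemma image_cline: "T \<in> UB \<Longrightarrow> v \<in> Hsp \<Longrightarrow> T ` cline v = cline (T v)"
  unfolding cline_def by (auto simp: UB_sc[symmetric])

lemma hyp_ptsI: "v \<in> Hsp \<Longrightarrow> Re (Bf v v) > 0 \<Longrightarrow> cline v \<in> hyp_pts"
  unfolding hyp_pts_def by auto

lemma hyp_ptsE:
  assumes "x \<in> hyp_pts"
  obtains v where "x = cline v" "v \<in> Hsp" "Re (Bf v v) > 0"
  using assms unfolding hyp_pts_def by auto

lemma image_hyp_pts:
  assumes "T \<in> UB" "x \<in> hyp_pts"
  shows "T ` x \<in> hyp_pts"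
  using assms(2) by (rule hyp_ptsE) (use assms(1) in \<open>simp add: image_cline UB_Hsp UB_Bf hyp_ptsI\<close>)

lemma rep_cline:
  assumes "v \<noteq> zvec"
  obtains s where "s \<noteq> 0" "rep (cline v) = sc s v"
proof -
  have "rep (cline v) \<in> cline v \<and> rep (cline v) \<noteq> zvec"
    unfolding rep_def by (rule someI[of _ v]) (simp add: self_in_cline assms)
  then show ?thesis
    using that unfolding cline_def by (auto simp: sc_eq_zvec_iff)
qed

lemma hdist_cline:
  assumes "v \<in> Hsp" "w \<in> Hsp" "v \<noteq> zvec" "w \<noteq> zvec"
  shows "hdist (cline v) (cline w) = arcosh (cmod (Bf v w) / sqrt (Re (Bf v v) * Re (Bf w w)))"
proof -
  obtain s r where sr: "s \<noteq> 0" "rep (cline v) = sc s v" "r \<noteq> 0" "rep (cline w) = sc r w"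
    using rep_cline[OF assms(3)] rep_cline[OF assms(4)] by metis
  have Re_Bf_sc: "Re (Bf (sc a u) (sc a u)) = (cmod a)^2 * Re (Bf u u)" if "u \<in> Hsp" for a u
  proof -
    have "Bf (sc a u) (sc a u) = (a * cnj a) * Bf u u"
      using that by (simp add: Bf_linear mult.assoc)
    also have "a * cnj a = of_real ((cmod a)^2)"
      by (simp only: complex_norm_square)
    finally show ?thesis
      by simp
  qed
  have "sqrt ((cmod s)^2 * Re (Bf v v) * ((cmod r)^2 * Re (Bf w w)))
      = cmod s * cmod r * sqrt (Re (Bf v v) * Re (Bf w w))"
    by (simp add: real_sqrt_mult mult_ac)
  moreover have "cmod (Bf (sc s v) (sc r w)) = cmod s * cmod r * cmod (Bf v w)"
    using assms by (simp add: Bf_linear norm_mult)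
  ultimately show ?thesis
    using assms sr unfolding hdist_def sr Re_Bf_sc[OF assms(1)] Re_Bf_sc[OF assms(2)] by simp
qed
lemma sc_independent:
  assumes "x \<noteq> zvec" "\<nexists>k. y = sc k x" "\<And>n. \<alpha> * x n + \<beta> * y n = 0"
  shows "\<alpha> = 0 \<and> \<beta> = 0"
proof -
  have "\<beta> = 0"
  proof (rule ccontr)
    assume "\<beta> \<noteq> 0"
    then have "y = sc (- \<alpha> / \<beta>) x"
      using assms(3) by (auto simp: sc_def fun_eq_iff field_simps add_eq_0_iff2)
    then show False
      using assms(2) by blast
  qed
  moreover obtain n where "x n \<noteq> 0"
    using assms(1) by (auto simp: zvec_def fun_eq_iff)
  ultimately show ?thesis
    using assms(3)[of n] by simp
qed

lemma proportional_perturbations: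
  assumes indep: "x \<noteq> zvec" "\<nexists>k. y = sc k x"
    and \<epsilon>: "\<epsilon>1 \<noteq> 0" "\<epsilon>2 \<noteq> 0" "\<epsilon>1 \<noteq> \<epsilon>2"
    and prop1: "vadd (sc s x) (sc \<epsilon>1 z) = sc a1 (vadd x (sc \<epsilon>1 y))"
    and prop2: "vadd (sc s x) (sc \<epsilon>2 z) = sc a2 (vadd x (sc \<epsilon>2 y))"
  shows "z = sc s y"
proof -
  have eq1: "s * x n + \<epsilon>1 * z n = a1 * (x n + \<epsilon>1 * y n)"
    and eq2: "s * x n + \<epsilon>2 * z n = a2 * (x n + \<epsilon>2 * y n)" for n
    using fun_cong[OF prop1, of n] fun_cong[OF prop2, of n] by (simp_all add: vadd_def sc_def)
  have "(\<epsilon>2 * (s - a1) - \<epsilon>1 * (s - a2)) * x n + (\<epsilon>1 * \<epsilon>2 * (a2 - a1)) * y n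
      = \<epsilon>2 * (s * x n + \<epsilon>1 * z n - a1 * (x n + \<epsilon>1 * y n))
      - \<epsilon>1 * (s * x n + \<epsilon>2 * z n - a2 * (x n + \<epsilon>2 * y n))" for n
    by (simp add: algebra_simps)
  then have "(\<epsilon>2 * (s - a1) - \<epsilon>1 * (s - a2)) * x n + (\<epsilon>1 * \<epsilon>2 * (a2 - a1)) * y n = 0" for n
    by (simp add: eq1 eq2)
  from sc_independent[OF indep this]
  have c1: "\<epsilon>2 * (s - a1) - \<epsilon>1 * (s - a2) = 0" and c2: "\<epsilon>1 * \<epsilon>2 * (a2 - a1) = 0"
    by auto
  from c2 \<epsilon>(1,2) have "a2 = a1"
    by simp
  with c1 have "(\<epsilon>2 - \<epsilon>1) * (s - a1) = 0"
    by (simp add: algebra_simps)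
  with \<epsilon>(3) have "a1 = s"
    by simp
  have "\<epsilon>1 * z n = \<epsilon>1 * (s * y n)" for n
    using eq1[of n] unfolding \<open>a1 = s\<close> by (simp add: algebra_simps)
  with \<epsilon>(1) show ?thesis
    by (simp add: sc_def fun_eq_iff)
qed

text \<open>Each positive vector is an eigenvector of the quotient of the two lifts. Positive vectors
near \<open>e0\<close> reach every direction, and two of them on a line through \<open>e0\<close> force a common
eigenvalue.\<close>

lemma UB_lifts_proportional:
  assumes U: "U \<in> UB" and V: "V \<in> UB" and same: "\<forall>x\<in>hyp_pts. U ` x = V ` x"
  shows "\<exists>s. \<forall>u\<in>Hsp. U u = sc s (V u)"
proof -
  have pos: "\<exists>a. U v = sc a (V v)" if "v \<in> Hsp" "Re (Bf v v) > 0" for v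
    using same hyp_ptsI[OF that] image_cline[OF U that(1)] image_cline[OF V that(1)]
    by (intro cline_eq_imp_sc) simp
  obtain s where s: "U e0 = sc s (V e0)"
    using pos[OF e0_Hsp] unfolding Bf_e0_left by (auto simp: e0_def)
  have "U u = sc s (V u)" if u: "u \<in> Hsp" for u
  proof (cases "\<exists>k. u = sc k e0")
    case True
    then show ?thesis
      using s U V by (auto simp: UB_sc e0_Hsp sc_sc mult.commute)
  next
    case False
    have indep: "\<nexists>k. V u = sc k (V e0)"
    proof
      assume "\<exists>k. V u = sc k (V e0)"
      then obtain k where "V u = V (sc k e0)"
        using UB_sc[OF V e0_Hsp] by auto
      then show False
        using False UB_inj_on[OF V] u sc_Hsp[OF e0_Hsp] by (auto dest: inj_onD)
    qed
    obtain \<delta> where \<delta>: "\<delta> > 0"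
      "\<And>\<epsilon>. 0 < \<epsilon> \<Longrightarrow> \<epsilon> < \<delta> \<Longrightarrow> Re (Bf (vadd e0 (sc (of_real \<epsilon>) u)) (vadd e0 (sc (of_real \<epsilon>) u))) > 0"
      using Re_Bf_e0_perturbation_pos[OF u] by blast
    have "\<exists>a. vadd (sc s (V e0)) (sc (of_real \<epsilon>) (U u)) = sc a (vadd (V e0) (sc (of_real \<epsilon>) (V u)))"
      if "0 < \<epsilon>" "\<epsilon> < \<delta>" for \<epsilon>
      using pos[OF vadd_Hsp[OF e0_Hsp sc_Hsp[OF u]] \<delta>(2)[OF that]] U V u e0_Hsp s
      by (simp add: UB_vadd UB_sc sc_Hsp)
    from this[of "\<delta> / 2"] this[of "\<delta> / 4"] \<delta>(1) obtain a1 a2 where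
      "vadd (sc s (V e0)) (sc (of_real (\<delta> / 2)) (U u))
        = sc a1 (vadd (V e0) (sc (of_real (\<delta> / 2)) (V u)))"
      "vadd (sc s (V e0)) (sc (of_real (\<delta> / 4)) (U u))
        = sc a2 (vadd (V e0) (sc (of_real (\<delta> / 4)) (V u)))"
      by auto
    from proportional_perturbations[OF UB_neq_zvec[OF V e0_Hsp] indep _ _ _ this] \<delta>(1) show ?thesis
      by (auto simp: e0_def zvec_def fun_eq_iff)
  qed
  then show ?thesis
    by blast
qed

section \<open>The one-parameter subgroups of \<open>SU(1,1)\<close>\<close>

lemma of_real_sqrt_2_mult:
  "complex_of_real (sqrt 2) * complex_of_real (sqrt 2) = 2"
  "complex_of_real (sqrt 2) * (complex_of_real (sqrt 2) * x) = 2 * x"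
  "complex_of_real (1 / sqrt 2) * complex_of_real (1 / sqrt 2) = 1 / 2"
  by (simp_all add: mult.assoc[symmetric] flip: of_real_mult)

lemma Pxi_involution: "Pxi ** Pxi = mat 1"
  by (simp add: vec_eq_iff forall_2 matrix_matrix_mult_def sum_2 Pxi_def mat_def of_real_sqrt_2_mult
      field_simps)

lemma matrix_inv_Pxi: "matrix_inv Pxi = Pxi"
proof -
  have inv: "Pxi ** matrix_inv Pxi = mat 1 \<and> matrix_inv Pxi ** Pxi = mat 1"
    unfolding matrix_inv_def by (rule someI[of _ Pxi]) (simp add: Pxi_involution)
  have "matrix_inv Pxi = matrix_inv Pxi ** (Pxi ** Pxi)"
    by (simp add: Pxi_involution)
  also have "\<dots> = Pxi"
    using inv by (simp add: matrix_mul_assoc)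
  finally show ?thesis .
qed

lemma gmat_mult:
  assumes "l \<noteq> 0" "l' \<noteq> 0"
  shows "gmat l b ** gmat l' b' = gmat (l * l') (l * b' + b / l')"
proof -
  have "gmat l b ** gmat l' b' = Pxi ** Mlb l b ** (Pxi ** Pxi) ** Mlb l' b' ** Pxi"
    unfolding gmat_def matrix_inv_Pxi by (simp add: matrix_mul_assoc)
  also have "\<dots> = Pxi ** (Mlb l b ** Mlb l' b') ** Pxi"
    by (simp add: Pxi_involution matrix_mul_assoc)
  also have "Mlb l b ** Mlb l' b' = Mlb (l * l') (l * b' + b / l')"
    using assms by (simp add: vec_eq_iff forall_2 matrix_matrix_mult_def sum_2 Mlb_def field_simps)
  finally show ?thesis
    unfolding gmat_def matrix_inv_Pxi .
qed

definition su11_mat :: "complex \<Rightarrow> complex \<Rightarrow> complex^2^2" where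
  "su11_mat a c = (\<chi> i j. if i = 1 \<and> j = 1 then a else if i = 1 \<and> j = 2 then c
                          else if i = 2 \<and> j = 1 then cnj c else cnj a)"

lemma su11_mat_SU11:
  assumes "a * cnj a - c * cnj c = 1"
  shows "su11_mat a c \<in> SU11"
proof -
  have "B2 (su11_mat a c *v z) (su11_mat a c *v w) = B2 z w * (a * cnj a - c * cnj c)" for z w
    by (simp add: B2_def matrix_vector_mult_def sum_2 su11_mat_def algebra_simps)
  then show ?thesis
    using assms unfolding SU11_def by (simp add: det_2 su11_mat_def mult.commute)
qed

lemma gmat_eq_su11_mat:
  assumes "l \<noteq> 0"
  shows "gmat l b = su11_mat ((of_real l + of_real (1/l) + \<i> * of_real b) / 2)
                             ((of_real l - of_real (1/l) - \<i> * of_real b) / 2)"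
  unfolding gmat_def matrix_inv_Pxi
  by (simp add: vec_eq_iff forall_2 matrix_matrix_mult_def sum_2 Pxi_def Mlb_def su11_mat_def
      algebra_simps of_real_sqrt_2_mult) (simp add: field_simps of_real_sqrt_2_mult)

lemma gmat_SU11:
  assumes "l \<noteq> 0"
  shows "gmat l b \<in> SU11"
proof -
  let ?a = "(of_real l + of_real (1/l) + \<i> * of_real b) / 2 :: complex"
  let ?c = "(of_real l - of_real (1/l) - \<i> * of_real b) / 2 :: complex"
  have "?a * cnj ?a - ?c * cnj ?c = 1"
    using assms by (simp add: complex_eq_iff field_simps power2_eq_square)
  then show ?thesis
    using gmat_eq_su11_mat[OF assms] su11_mat_SU11 by simp
qed

lemma gmat_unipotent_SU11: "gmat 1 b \<in> SU11"
  by (simp add: gmat_SU11)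

lemma norm_gmat_diff: "norm (gmat 1 b - gmat 1 0) = \<bar>b\<bar>"
proof -
  have "gmat 1 b - gmat 1 0 = (\<chi> i j. if j = 1 then \<i> * of_real b / 2 else - \<i> * of_real b / 2)"
    unfolding gmat_eq_su11_mat[of 1, simplified]
    by (simp add: vec_eq_iff forall_2 su11_mat_def field_simps)
  then show ?thesis
    by (simp add: norm_vec_def L2_set_def sum_2 norm_mult power2_eq_square real_sqrt_mult
        flip: real_sqrt_mult)
qed

lemma induces_comp:
  assumes rep: "is_rep \<rho>" and g: "g \<in> SU11" and h: "h \<in> SU11"
    and U: "U \<in> UB" "induces U (\<rho> g)" and V: "V \<in> UB" "induces V (\<rho> h)"
  shows "induces (U \<circ> V) (\<rho> (g ** h))"
  unfolding induces_def
proof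
  fix x assume x: "x \<in> hyp_pts"
  have "\<forall>g\<in>SU11. \<forall>h\<in>SU11. \<forall>x\<in>hyp_pts. \<rho> (g ** h) x = \<rho> g (\<rho> h x)"
    using rep unfolding is_rep_def by (elim conjE)
  then have "\<rho> (g ** h) x = \<rho> g (\<rho> h x)"
    using g h x by blast
  also have "\<rho> h x = V ` x"
    using V(2) x unfolding induces_def by blast
  also have "\<rho> g (V ` x) = U ` (V ` x)"
    using U(2) image_hyp_pts[OF V(1) x] unfolding induces_def by blast
  finally show "\<rho> (g ** h) x = (U \<circ> V) ` x"
    by (simp add: image_comp)
qed

lemma induces_proportional:
  assumes "U \<in> UB" "V \<in> UB" "induces U f" "induces V f"
  shows "\<exists>s. \<forall>u\<in>Hsp. U u = sc s (V u)"
proof (rule UB_lifts_proportional[OF assms(1,2)])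
  show "\<forall>x\<in>hyp_pts. U ` x = V ` x"
    using assms(3,4) unfolding induces_def by auto
qed

lemma affine_map_onto_pos_reals:
  fixes P Q :: real
  assumes onto: "(\<lambda>a. P * a + Q) ` {0<..} = {0<..}"
  shows "P > 0 \<and> Q = 0"
proof -
  have pos: "P * a + Q > 0" if "a > 0" for a
  proof -
    have "P * a + Q \<in> (\<lambda>a. P * a + Q) ` {0<..}"
      using that by (intro imageI) simp
    then show ?thesis
      unfolding onto by simp
  qed
  have hit: "\<exists>a>0. P * a + Q = b" if "b > 0" for b
  proof -
    have "b \<in> (\<lambda>a. P * a + Q) ` {0<..}"
      unfolding onto using that by simp
    then show ?thesis
      by auto
  qed
  have "P \<noteq> 0"
    using hit[of 1] hit[of 2] by auto
  moreover have "\<not> P < 0"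
  proof
    assume "P < 0"
    then have "P * ((\<bar>Q\<bar> + 1) / - P) + Q < 0"
      by simp
    with pos[of "(\<bar>Q\<bar> + 1) / - P"] \<open>P < 0\<close> show False
      by (simp add: divide_pos_neg)
  qed
  ultimately have "P > 0"
    by simp
  moreover have "\<not> Q < 0"
    using pos[of "- Q / P"] \<open>P > 0\<close> by (auto simp: divide_neg_pos)
  moreover have "\<not> Q > 0"
  proof
    assume "Q > 0"
    with hit[of "Q / 2"] obtain a where "a > 0" "P * a + Q = Q / 2"
      by auto
    with mult_pos_pos[OF \<open>P > 0\<close> \<open>a > 0\<close>] \<open>Q > 0\<close> show False
      by linarith
  qed
  ultimately show ?thesis
    by simp
qed

lemma complex_affine_map_onto_pos_reals:
  fixes p q :: complex
  assumes onto: "(\<lambda>a. p * of_real a + q) ` {0<..} = of_real ` {0<..}"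
  shows "q = 0 \<and> (\<exists>r>0. p = of_real r)"
proof -
  have real: "p * of_real a + q \<in> \<real>" if "a > 0" for a
  proof -
    have "p * of_real a + q \<in> of_real ` {0<..}"
      unfolding onto[symmetric] using that by (intro imageI) simp
    then show ?thesis
      by (auto simp: Reals_def)
  qed
  have "p = (p * of_real 2 + q) - (p * of_real 1 + q)"
    by (simp add: algebra_simps)
  also have "\<dots> \<in> \<real>"
    using real[of 1] real[of 2] by (intro Reals_diff) simp_all
  finally obtain P where P: "p = of_real P"
    by (erule Reals_cases)
  have "q = (p * of_real 1 + q) - p"
    by simp
  also have "\<dots> \<in> \<real>"
    using real[of 1] P by (intro Reals_diff) simp_all
  finally obtain Q where Q: "q = of_real Q"
    by (erule Reals_cases)
  have "of_real ` ((\<lambda>a. P * a + Q) ` {0<..}) = (\<lambda>a. p * of_real a + q) ` {0<..}"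
    unfolding image_image P Q by simp
  then have "(of_real ` ((\<lambda>a. P * a + Q) ` {0<..}) :: complex set) = of_real ` {0<..}"
    unfolding onto .
  then have "(\<lambda>a. P * a + Q) ` {0<..} = {0<..}"
    by (rule inj_image_eq_iff[OF inj_of_real, THEN iffD1])
  from affine_map_onto_pos_reals[OF this] P Q show ?thesis
    by auto
qed

locale null_frame =
  fixes \<eta>1 \<eta>2 :: hvec
  assumes eta1_Hsp: "\<eta>1 \<in> Hsp" and eta2_Hsp: "\<eta>2 \<in> Hsp"
    and eta1_iso: "Bf \<eta>1 \<eta>1 = 0" and eta2_iso: "Bf \<eta>2 \<eta>2 = 0"
    and eta12: "Bf \<eta>1 \<eta>2 = 1"
begin

lemma eta21: "Bf \<eta>2 \<eta>1 = 1"
  using Bf_commute_cnj[OF eta1_Hsp eta2_Hsp] eta12 by simp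

lemmas frame_simps = Bf_linear eta1_Hsp eta2_Hsp eta12 eta21 eta1_iso eta2_iso

lemma eta1_neq_zvec: "\<eta>1 \<noteq> zvec"
  using eta12 by (auto simp: Bf_def zvec_def)

definition geod_vec :: "real \<Rightarrow> hvec" where
  "geod_vec a = vadd (sc (of_real a) \<eta>1) \<eta>2"

lemma geod_vec_Hsp: "geod_vec a \<in> Hsp"
  unfolding geod_vec_def by (simp add: frame_simps)

lemma Bf_geod_vec: "Bf (geod_vec a) (geod_vec a') = of_real (a + a')"
  unfolding geod_vec_def by (simp add: frame_simps)

lemma Bf_geod_vec_eta1: "Bf (geod_vec a) \<eta>1 = 1"
  and Bf_geod_vec_eta2: "Bf (geod_vec a) \<eta>2 = of_real a"
  unfolding geod_vec_def by (simp_all add: frame_simps)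

lemma geod_vec_neq_zvec: "geod_vec a \<noteq> zvec"
  using Bf_geod_vec_eta1[of a] by (auto simp: Bf_def zvec_def)

lemma cline_geod_vec_hyp_pts: "a > 0 \<Longrightarrow> cline (geod_vec a) \<in> hyp_pts"
  by (rule hyp_ptsI) (simp_all add: geod_vec_Hsp Bf_geod_vec)

lemma geod_eq: "geod \<eta>1 \<eta>2 = {cline (geod_vec a) | a. a > 0}"
  unfolding geod_def geod_vec_def ..

lemma geod_hyp_pts: "geod \<eta>1 \<eta>2 \<subseteq> hyp_pts"
  unfolding geod_eq using cline_geod_vec_hyp_pts by blast

lemma hdist_geod_vec_scale:
  assumes "r > 0" "a > 0"
  shows "hdist (cline (geod_vec (r^2 * a))) (cline (geod_vec a)) = \<bar>ln r\<bar>"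
proof -
  have "cmod (Bf (geod_vec (r^2 * a)) (geod_vec a)) = r^2 * a + a"
    unfolding Bf_geod_vec norm_of_real using assms by simp
  moreover have "Re (Bf (geod_vec (r^2 * a)) (geod_vec (r^2 * a))) * Re (Bf (geod_vec a) (geod_vec a))
      = (2 * r * a)^2"
    by (simp add: Bf_geod_vec power2_eq_square)
  ultimately have "hdist (cline (geod_vec (r^2 * a))) (cline (geod_vec a))
      = arcosh ((r^2 * a + a) / (2 * r * a))"
    using assms by (simp add: hdist_cline geod_vec_Hsp geod_vec_neq_zvec)
  also have "(r^2 * a + a) / (2 * r * a) = cosh \<bar>ln r\<bar>"
    using assms cosh_ln_real[OF assms(1)] by (simp add: field_simps power2_eq_square abs_if)
  finally show ?thesis
    by (simp only: arcosh_cosh_real[OF abs_ge_zero])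
qed

lemma Bf_frame_eta2:
  assumes "e \<in> Eperp \<eta>1 \<eta>2"
  shows "Bf (vadd (vadd (sc k \<eta>1) \<eta>2) e) \<eta>2 = k"
  using assms unfolding Eperp_def by (simp add: frame_simps)

lemma Bf_frame_self:
  assumes "e \<in> Eperp \<eta>1 \<eta>2"
  shows "Bf (vadd (vadd (sc k \<eta>1) \<eta>2) e) (vadd (vadd (sc k \<eta>1) \<eta>2) e) = k + cnj k + Bf e e"
proof -
  have "Bf \<eta>1 e = 0" "Bf \<eta>2 e = 0"
    using assms Bf_commute_cnj[of e \<eta>1] Bf_commute_cnj[of e \<eta>2] unfolding Eperp_def
    by (simp_all add: eta1_Hsp eta2_Hsp)
  then show ?thesis
    using assms unfolding Eperp_def by (simp add: frame_simps)
qed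

lemma cline_frame_eq_geod_vec_iff:
  assumes "\<gamma> \<noteq> 0"
  shows "cline (vadd (sc x \<eta>1) (sc \<gamma> \<eta>2)) = cline (geod_vec a) \<longleftrightarrow> x = \<gamma> * of_real a"
proof
  assume "cline (vadd (sc x \<eta>1) (sc \<gamma> \<eta>2)) = cline (geod_vec a)"
  then obtain s where s: "vadd (sc x \<eta>1) (sc \<gamma> \<eta>2) = sc s (geod_vec a)"
    using cline_eq_imp_sc by blast
  have "\<gamma> = s"
    using arg_cong[OF s, of "\<lambda>v. Bf v \<eta>1"] by (simp add: frame_simps geod_vec_Hsp Bf_geod_vec_eta1)
  moreover have "x = s * of_real a"
    using arg_cong[OF s, of "\<lambda>v. Bf v \<eta>2"] by (simp add: frame_simps geod_vec_Hsp Bf_geod_vec_eta2)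
  ultimately show "x = \<gamma> * of_real a"
    by simp
next
  assume "x = \<gamma> * of_real a"
  then have "vadd (sc x \<eta>1) (sc \<gamma> \<eta>2) = sc \<gamma> (geod_vec a)"
    unfolding geod_vec_def by (simp add: fun_eq_iff vadd_def sc_def algebra_simps)
  then show "cline (vadd (sc x \<eta>1) (sc \<gamma> \<eta>2)) = cline (geod_vec a)"
    using cline_sc[OF assms] by simp
qed

lemma UB_eta2_in_frame:
  assumes A: "A \<in> UB" "A \<eta>1 = sc \<alpha> \<eta>1" "A ` cline (geod_vec 1) \<in> geod \<eta>1 \<eta>2"
  obtains \<beta> \<gamma> where "\<gamma> \<noteq> 0" "A \<eta>2 = vadd (sc \<beta> \<eta>1) (sc \<gamma> \<eta>2)"
proof -
  obtain a1 where "a1 > 0" "cline (A (geod_vec 1)) = cline (geod_vec a1)"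
    using A(3) unfolding image_cline[OF A(1) geod_vec_Hsp] geod_eq by auto
  then obtain \<gamma> where "A (geod_vec 1) = sc \<gamma> (geod_vec a1)"
    using cline_eq_imp_sc by blast
  moreover have "A (geod_vec 1) = vadd (sc \<alpha> \<eta>1) (A \<eta>2)"
    unfolding geod_vec_def using A(1,2) by (simp add: UB_vadd UB_sc frame_simps sc_one)
  ultimately have A_eta2: "A \<eta>2 = vadd (sc (\<gamma> * of_real a1 - \<alpha>) \<eta>1) (sc \<gamma> \<eta>2)"
    unfolding geod_vec_def by (simp add: fun_eq_iff vadd_def sc_def algebra_simps)
  have "\<alpha> * cnj \<gamma> = 1"
    using UB_Bf[OF A(1) eta1_Hsp eta2_Hsp] unfolding A(2) A_eta2
    by (simp add: frame_simps mult.commute)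
  then have "\<gamma> \<noteq> 0"
    by auto
  with A_eta2 show ?thesis
    using that by blast
qed

text \<open>A unitary operator fixing \<open>[\<eta>1]\<close> and preserving the geodesic acts on it through an
affine map of the parameter, which must be a dilation since it maps \<open>(0,\<infinity>)\<close> onto itself;
so it also fixes the other endpoint \<open>[\<eta>2]\<close>.\<close>

lemma UB_diagonal_if_preserves_geod:
  assumes A: "A \<in> UB" "A \<eta>1 \<in> cline \<eta>1"
    and G: "(\<lambda>x. A ` x) ` geod \<eta>1 \<eta>2 = geod \<eta>1 \<eta>2"
  shows "\<exists>\<gamma> p. p > 0 \<and> \<gamma> \<noteq> 0 \<and> A \<eta>1 = sc (of_real p * \<gamma>) \<eta>1 \<and> A \<eta>2 = sc \<gamma> \<eta>2"
proof -
  obtain \<alpha> where \<alpha>: "A \<eta>1 = sc \<alpha> \<eta>1"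
    using A(2) unfolding cline_def by blast
  have "cline (geod_vec 1) \<in> geod \<eta>1 \<eta>2"
    unfolding geod_eq by auto
  then have "A ` cline (geod_vec 1) \<in> geod \<eta>1 \<eta>2"
    using G by blast
  then obtain \<beta> \<gamma> where "\<gamma> \<noteq> 0" and A_eta2: "A \<eta>2 = vadd (sc \<beta> \<eta>1) (sc \<gamma> \<eta>2)"
    by (rule UB_eta2_in_frame[OF A(1) \<alpha>])
  have "A (geod_vec a) = vadd (sc (of_real a * \<alpha> + \<beta>) \<eta>1) (sc \<gamma> \<eta>2)" for a
    unfolding geod_vec_def using A(1) \<alpha> A_eta2
    by (simp add: UB_vadd UB_sc frame_simps) (simp add: fun_eq_iff vadd_def sc_def algebra_simps)
  then have coeff: "A ` cline (geod_vec a) = cline (geod_vec a')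
      \<longleftrightarrow> (\<alpha> / \<gamma>) * of_real a + \<beta> / \<gamma> = of_real a'" for a a'
    using cline_frame_eq_geod_vec_iff[OF \<open>\<gamma> \<noteq> 0\<close>] \<open>\<gamma> \<noteq> 0\<close>
    by (simp add: image_cline[OF A(1) geod_vec_Hsp] field_simps)
  have "(\<lambda>a. (\<alpha> / \<gamma>) * of_real a + \<beta> / \<gamma>) ` {0<..} = of_real ` {0<..}"
  proof (intro equalityI subsetI)
    fix z assume "z \<in> (\<lambda>a. (\<alpha> / \<gamma>) * of_real a + \<beta> / \<gamma>) ` {0<..}"
    then obtain a where "a > 0" "z = (\<alpha> / \<gamma>) * of_real a + \<beta> / \<gamma>"
      by auto
    moreover have "A ` cline (geod_vec a) \<in> geod \<eta>1 \<eta>2"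
      using G \<open>a > 0\<close> unfolding geod_eq by blast
    then obtain a' where "a' > 0" "A ` cline (geod_vec a) = cline (geod_vec a')"
      unfolding geod_eq by auto
    ultimately show "z \<in> of_real ` {0<..}"
      using coeff by auto
  next
    fix z assume "z \<in> (of_real ` {0<..} :: complex set)"
    then obtain a' where "a' > 0" "z = of_real a'"
      by auto
    then have "cline (geod_vec a') \<in> geod \<eta>1 \<eta>2"
      unfolding geod_eq by blast
    then have "cline (geod_vec a') \<in> (\<lambda>x. A ` x) ` geod \<eta>1 \<eta>2"
      unfolding G .
    then obtain a where "a > 0" "A ` cline (geod_vec a) = cline (geod_vec a')"
      unfolding geod_eq by auto
    with \<open>z = of_real a'\<close> coeff show "z \<in> (\<lambda>a. (\<alpha> / \<gamma>) * of_real a + \<beta> / \<gamma>) ` {0<..}"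
      by (intro image_eqI[of _ _ a]) simp_all
  qed
  then obtain p where "\<beta> / \<gamma> = 0" "p > 0" "\<alpha> / \<gamma> = of_real p"
    using complex_affine_map_onto_pos_reals by blast
  then show ?thesis
    using \<open>\<gamma> \<noteq> 0\<close> \<alpha> A_eta2
    by (intro exI[of _ \<gamma>] exI[of _ p]) (simp add: field_simps fun_eq_iff vadd_def sc_def)
qed

end

section \<open>The lifts of the unipotent subgroup\<close>

locale unipotent_lifts = null_frame \<eta>1 \<eta>2 for \<eta>1 \<eta>2 +
  fixes \<rho> :: "complex^2^2 \<Rightarrow> hvec set \<Rightarrow> hvec set"
    and T :: "real \<Rightarrow> hvec \<Rightarrow> hvec"
    and K :: "real \<Rightarrow> complex"
    and c :: "real \<Rightarrow> hvec"
  assumes rep: "is_rep \<rho>"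
    and T_lift: "\<forall>b. T b \<in> UB \<and> induces (T b) (\<rho> (gmat 1 b)) \<and> T b \<eta>1 = \<eta>1"
    and T_eta2_eq: "\<forall>b. T b \<eta>2 = vadd (vadd (sc (K b) \<eta>1) \<eta>2) (c b) \<and> c b \<in> Eperp \<eta>1 \<eta>2"
begin

lemma T_UB: "T b \<in> UB"
  and T_induces: "induces (T b) (\<rho> (gmat 1 b))"
  and T_eta1: "T b \<eta>1 = \<eta>1"
  and T_eta2: "T b \<eta>2 = vadd (vadd (sc (K b) \<eta>1) \<eta>2) (c b)"
  and c_Eperp: "c b \<in> Eperp \<eta>1 \<eta>2"
  using T_lift T_eta2_eq by blast+

lemma c_Hsp: "c b \<in> Hsp"
  and Bf_c_eta1: "Bf (c b) \<eta>1 = 0"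
  and Bf_c_eta2: "Bf (c b) \<eta>2 = 0"
  using c_Eperp unfolding Eperp_def by blast+

lemma T_add:
  assumes u: "u \<in> Hsp"
  shows "T b (T d u) = T (b + d) u"
proof -
  have "gmat 1 b ** gmat 1 d = gmat 1 (b + d)"
    using gmat_mult[of 1 1 b d] by (simp add: add.commute)
  moreover have "induces (T b \<circ> T d) (\<rho> (gmat 1 b ** gmat 1 d))"
    by (rule induces_comp[OF rep gmat_unipotent_SU11 gmat_unipotent_SU11
          T_UB T_induces T_UB T_induces])
  ultimately have "induces (T b \<circ> T d) (\<rho> (gmat 1 (b + d)))"
    by simp
  then obtain s where s: "\<forall>u\<in>Hsp. T (b + d) u = sc s ((T b \<circ> T d) u)"
    using induces_proportional[OF T_UB UB_comp[OF T_UB T_UB] T_induces] by blast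
  then have "sc 1 \<eta>1 = sc s \<eta>1"
    using bspec[OF s eta1_Hsp] by (simp add: T_eta1 sc_one)
  then have "s = 1"
    using sc_cancel eta1_neq_zvec by metis
  then show ?thesis
    using s u by (simp add: sc_one)
qed

lemma T_zero: "u \<in> Hsp \<Longrightarrow> T 0 u = u"
  using T_add[of u 0 0] UB_inj_on[OF T_UB] UB_Hsp[OF T_UB] by (auto dest: inj_onD)

lemma Bf_T_eta2_eta2: "Bf (T b \<eta>2) \<eta>2 = K b"
  unfolding T_eta2 using Bf_frame_eta2[OF c_Eperp] .

lemma K_zero: "K 0 = 0"
  using Bf_T_eta2_eta2[of 0] T_zero[OF eta2_Hsp] eta2_iso by simp

text \<open>Compare the \<open>\<eta>2\<close>-coefficients of \<open>T (b + d) \<eta>2 = T b (T d \<eta>2)\<close>,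
using that \<open>T b\<close> is unitary with inverse \<open>T (- b)\<close>.\<close>

lemma K_add: "K (b + d) = K b + K d + Bf (c d) (c (- b))"
proof -
  have "T (b + d) \<eta>2 = vadd (vadd (sc (K d) \<eta>1) (T b \<eta>2)) (T b (c d))"
    using T_add[OF eta2_Hsp, of b d, symmetric] T_UB[of b]
    unfolding T_eta2[of d] by (simp add: UB_vadd UB_sc frame_simps c_Hsp T_eta1)
  moreover have "Bf (T b (c d)) \<eta>2 = Bf (c d) (c (- b))"
  proof -
    have "Bf (T b (c d)) \<eta>2 = Bf (T b (c d)) (T b (T (- b) \<eta>2))"
      using T_add[OF eta2_Hsp, of b "- b"] T_zero[OF eta2_Hsp] by simp
    also have "\<dots> = Bf (c d) (T (- b) \<eta>2)"
      using UB_Bf[OF T_UB c_Hsp UB_Hsp[OF T_UB eta2_Hsp]] .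
    also have "\<dots> = Bf (c d) (c (- b))"
      unfolding T_eta2 using Bf_c_eta1 Bf_c_eta2 Bf_commute_cnj[OF c_Hsp, of _ d]
      by (simp add: frame_simps c_Hsp)
    finally show ?thesis .
  qed
  ultimately have "Bf (T (b + d) \<eta>2) \<eta>2 = K d + K b + Bf (c d) (c (- b))"
    using T_UB[of b] by (simp add: frame_simps c_Hsp UB_Hsp Bf_T_eta2_eta2)
  then show ?thesis
    by (simp add: Bf_T_eta2_eta2)
qed

lemma K_isotropy: "K b + cnj (K b) + Bf (c b) (c b) = 0"
  using UB_Bf[OF T_UB eta2_Hsp eta2_Hsp, of b] eta2_iso
  unfolding T_eta2 Bf_frame_self[OF c_Eperp] by simp

lemma K_uminus: "K (- b) = cnj (K b)"
proof -
  have "K b + (K (- b) + Bf (c (- b)) (c (- b))) = 0"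
    using K_add[of b "- b"] K_zero by (simp add: add.assoc)
  moreover have "cnj (K (- b)) + (K (- b) + Bf (c (- b)) (c (- b))) = 0"
    using K_isotropy[of "- b"] by (simp add: ac_simps)
  ultimately have "K b = cnj (K (- b))"
    by (metis add_right_cancel)
  then show ?thesis
    by simp
qed

lemma Re_K_nonneg: "Re (K b) \<ge> 0"
proof -
  have "Re (Bf (c b) (c b)) \<le> 0"
    using Re_Bf_self_nonpos_if_orthogonal[OF geod_vec_Hsp _ c_Hsp, of 1]
    by (simp add: Bf_geod_vec geod_vec_def frame_simps c_Hsp Bf_c_eta1 Bf_c_eta2)
  with arg_cong[OF K_isotropy[of b], of Re] show ?thesis
    by simp
qed

lemma rho_unipotent_geod_vec: "\<rho> (gmat 1 b) (cline (geod_vec 1)) = cline (T b (geod_vec 1))"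
  using T_induces cline_geod_vec_hyp_pts[of 1] image_cline[OF T_UB geod_vec_Hsp]
  unfolding induces_def by simp

lemma hdist_T_geod_vec:
  "hdist (\<rho> (gmat 1 b) (cline (geod_vec 1))) (cline (geod_vec 1)) = arcosh (cmod (2 + K b) / 2)"
proof -
  have T_geod_vec: "T b (geod_vec 1) = vadd \<eta>1 (T b \<eta>2)"
    unfolding geod_vec_def using T_UB by (simp add: UB_vadd frame_simps UB_sc T_eta1 sc_one)
  have "Bf (T b \<eta>2) \<eta>1 = 1"
    using UB_Bf[OF T_UB eta2_Hsp eta1_Hsp, of b] by (simp add: T_eta1 eta21)
  then have "Bf (vadd \<eta>1 (T b \<eta>2)) (geod_vec 1) = 2 + K b"
    unfolding geod_vec_def using T_UB[of b] by (simp add: frame_simps UB_Hsp Bf_T_eta2_eta2 sc_one)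
  then have "Bf (T b (geod_vec 1)) (geod_vec 1) = 2 + K b"
    by (simp only: T_geod_vec)
  then show ?thesis
    using UB_Bf[OF T_UB geod_vec_Hsp geod_vec_Hsp] unfolding rho_unipotent_geod_vec
    by (simp add: hdist_cline UB_Hsp[OF T_UB] geod_vec_Hsp geod_vec_neq_zvec UB_neq_zvec[OF T_UB]
        Bf_geod_vec)
qed

lemma norm_K_sq_le: "(cmod (K b))^2 \<le> (cmod (2 + K b))^2 - 4"
  using Re_K_nonneg[of b] by (simp add: cmod_power2 power2_sum)

text \<open>Orbital continuity at \<open>[geod_vec 1]\<close> makes \<open>arcosh (\<bar>2 + K b\<bar> / 2)\<close> small for small \<open>b\<close>.\<close>

lemma isCont_K: "isCont K 0"
  unfolding continuous_at_eps_delta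
proof (intro allI impI)
  fix \<epsilon> :: real assume "\<epsilon> > 0"
  define y where "y = sqrt (1 + \<epsilon>^2 / 4)"
  have "y > 1" "(2 * y)^2 = 4 + \<epsilon>^2"
    using \<open>\<epsilon> > 0\<close> by (simp_all add: y_def power_mult_distrib)
  have "\<forall>x\<in>hyp_pts. \<forall>g\<in>SU11. \<forall>e>0. \<exists>d>0. \<forall>h\<in>SU11.
          norm (h - g) < d \<longrightarrow> hdist (\<rho> h x) (\<rho> g x) < e"
    using rep unfolding is_rep_def by (elim conjE)
  moreover have "arcosh y > 0"
    using \<open>y > 1\<close> by simp
  ultimately obtain d where "d > 0" and d: "\<And>h. h \<in> SU11 \<Longrightarrow> norm (h - gmat 1 0) < d \<Longrightarrow>
      hdist (\<rho> h (cline (geod_vec 1))) (\<rho> (gmat 1 0) (cline (geod_vec 1))) < arcosh y"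
    using cline_geod_vec_hyp_pts[of 1] gmat_unipotent_SU11[of 0] by fastforce
  have "cmod (K b) < \<epsilon>" if "\<bar>b\<bar> < d" for b
  proof -
    have "\<rho> (gmat 1 0) (cline (geod_vec 1)) = cline (geod_vec 1)"
      unfolding rho_unipotent_geod_vec by (simp add: T_zero geod_vec_Hsp)
    then have "arcosh (cmod (2 + K b) / 2) < arcosh y"
      using d[OF gmat_unipotent_SU11] that by (simp add: norm_gmat_diff hdist_T_geod_vec)
    moreover have "1 \<le> cmod (2 + K b) / 2"
      using complex_Re_le_cmod[of "2 + K b"] Re_K_nonneg[of b] by simp
    ultimately have "cmod (2 + K b) < 2 * y"
      using \<open>y > 1\<close> by simp
    then have "(cmod (2 + K b))^2 < (2 * y)^2"
      by (rule power_strict_mono) simp_all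
    with norm_K_sq_le[of b] \<open>(2 * y)^2 = 4 + \<epsilon>^2\<close> have "(cmod (K b))^2 < \<epsilon>^2"
      by simp
    with \<open>\<epsilon> > 0\<close> show ?thesis
      by (simp add: power_less_imp_less_base)
  qed
  then show "\<exists>d>0. \<forall>b. dist b 0 < d \<longrightarrow> dist (K b) (K 0) < \<epsilon>"
    using \<open>d > 0\<close> K_zero by auto
qed

end

section \<open>Homogeneity of \<open>K\<close>\<close>

lemma eq_0_if_isCont_and_expanding:
  fixes f :: "real \<Rightarrow> 'a::real_normed_vector"
  assumes cont: "isCont f 0" "f 0 = 0"
    and q: "0 < q" "q < 1" and m: "1 \<le> m"
    and scaling: "\<And>b. f (q * b) = m *\<^sub>R f b"
  shows "f b = 0"
proof -
  have power: "f (q ^ n * b) = m ^ n *\<^sub>R f b" for n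
  proof (induction n)
    case (Suc n)
    have "f (q ^ Suc n * b) = m *\<^sub>R f (q ^ n * b)"
      by (simp add: mult.assoc scaling)
    then show ?case
      by (simp add: Suc)
  qed simp
  have "(\<lambda>n. q ^ n * b) \<longlonglongrightarrow> 0"
    using q by (intro tendsto_mult_left_zero LIMSEQ_power_zero) simp
  from isCont_tendsto_compose[OF cont(1) this]
  have "(\<lambda>n. norm (f (q ^ n * b))) \<longlonglongrightarrow> 0"
    using cont(2) tendsto_norm_zero by fastforce
  moreover have "norm (f b) \<le> norm (f (q ^ n * b))" for n
  proof -
    have "1 \<le> m ^ n"
      using m by (rule one_le_power)
    then show ?thesis
      using m by (simp add: power mult_le_cancel_right1)
  qed
  ultimately have "norm (f b) \<le> 0"
    by (intro LIMSEQ_le_const) auto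
  then show ?thesis
    by simp
qed

locale hyperbolic_scaling = unipotent_lifts \<eta>1 \<eta>2 \<rho> T K c for \<eta>1 \<eta>2 \<rho> T K c +
  fixes t :: real
  assumes ell: "ell_is \<rho> t"
    and eta1_fix: "\<forall>l b. l \<noteq> 0 \<longrightarrow> fixes_bd (\<rho> (gmat l b)) (cline \<eta>1)"
    and eta2_axis: "\<forall>l>0. l \<noteq> 1 \<longrightarrow> is_axis (geod \<eta>1 \<eta>2) (\<rho> (gmat l 0))"
begin

lemma t_pos: "t > 0"
  using ell unfolding ell_is_def by simp

lemma diagonal_lift:
  assumes "\<mu> > 0" "\<mu> \<noteq> 1"
  obtains A \<gamma> p where "A \<in> UB" "induces A (\<rho> (gmat \<mu> 0))" "p > 0" "\<gamma> \<noteq> 0"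
    "A \<eta>1 = sc (of_real p * \<gamma>) \<eta>1" "A \<eta>2 = sc \<gamma> \<eta>2"
proof -
  have "fixes_bd (\<rho> (gmat \<mu> 0)) (cline \<eta>1)"
    using eta1_fix assms by simp
  then obtain A where A: "A \<in> UB" "induces A (\<rho> (gmat \<mu> 0))" "A ` cline \<eta>1 = cline \<eta>1"
    unfolding fixes_bd_def by blast
  have "is_axis (geod \<eta>1 \<eta>2) (\<rho> (gmat \<mu> 0))"
    using eta2_axis assms by simp
  then have "\<rho> (gmat \<mu> 0) ` geod \<eta>1 \<eta>2 = geod \<eta>1 \<eta>2"
    unfolding is_axis_def by blast
  moreover have "\<rho> (gmat \<mu> 0) x = A ` x" if "x \<in> geod \<eta>1 \<eta>2" for x
    using A(2) geod_hyp_pts that unfolding induces_def by blast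
  then have "\<rho> (gmat \<mu> 0) ` geod \<eta>1 \<eta>2 = (\<lambda>x. A ` x) ` geod \<eta>1 \<eta>2"
    by (rule image_cong[OF refl])
  moreover have "A \<eta>1 \<in> cline \<eta>1"
    using A(3) self_in_cline by blast
  ultimately obtain \<gamma> p where "p > 0" "\<gamma> \<noteq> 0" "A \<eta>1 = sc (of_real p * \<gamma>) \<eta>1" "A \<eta>2 = sc \<gamma> \<eta>2"
    using UB_diagonal_if_preserves_geod[OF A(1)] by auto
  from that[OF A(1,2) this] show ?thesis .
qed

context
  fixes \<mu> A \<gamma> p
  assumes \<mu>: "\<mu> > 0" "\<mu> \<noteq> 1"
    and A: "A \<in> UB" "induces A (\<rho> (gmat \<mu> 0))"
    and \<gamma>: "p > 0" "\<gamma> \<noteq> 0" "A \<eta>1 = sc (of_real p * \<gamma>) \<eta>1" "A \<eta>2 = sc \<gamma> \<eta>2"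
begin

text \<open>The diagonal lift moves \<open>[geod_vec a]\<close> to \<open>[geod_vec (p a)]\<close>, a hyperbolic distance
\<open>\<bar>ln p\<bar> / 2\<close> along the axis.\<close>

lemma diagonal_lift_abs_ln_factor: "\<bar>ln p\<bar> = t * \<bar>ln (\<mu>^2)\<bar>"
proof -
  have "A (geod_vec 1) = vadd (sc (of_real p * \<gamma>) \<eta>1) (sc \<gamma> \<eta>2)"
    unfolding geod_vec_def using A(1) \<gamma>(3,4) by (simp add: UB_vadd UB_sc frame_simps sc_one)
  also have "\<dots> = sc \<gamma> (geod_vec ((sqrt p)^2 * 1))"
    unfolding geod_vec_def using \<gamma>(1) by (simp add: fun_eq_iff vadd_def sc_def algebra_simps)
  finally have "\<rho> (gmat \<mu> 0) (cline (geod_vec 1)) = cline (geod_vec ((sqrt p)^2 * 1))"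
    using A(2) cline_geod_vec_hyp_pts[of 1] image_cline[OF A(1) geod_vec_Hsp] cline_sc[OF \<gamma>(2)]
    unfolding induces_def by simp
  moreover have "is_axis (geod \<eta>1 \<eta>2) (\<rho> (gmat \<mu> 0))" "displ (\<rho> (gmat \<mu> 0)) = t * \<bar>ln \<mu>\<bar>"
    using eta2_axis ell \<mu> unfolding ell_is_def by simp_all
  moreover have "cline (geod_vec 1) \<in> geod \<eta>1 \<eta>2"
    unfolding geod_eq by auto
  ultimately have "hdist (cline (geod_vec ((sqrt p)^2 * 1))) (cline (geod_vec 1)) = t * \<bar>ln \<mu>\<bar>"
    unfolding is_axis_def by metis
  then have "\<bar>ln (sqrt p)\<bar> = t * \<bar>ln \<mu>\<bar>"
    using hdist_geod_vec_scale[of "sqrt p" 1] \<gamma>(1) by simp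
  then show ?thesis
    using \<gamma>(1) \<mu>(1) by (simp add: ln_sqrt ln_realpow abs_mult)
qed

text \<open>Conjugating the unipotent lift by the diagonal one: \<open>g(\<mu>,0) g(1,b) = g(1,\<mu>\<^sup>2 b) g(\<mu>,0)\<close>.\<close>

lemma diagonal_lift_conj: "K (\<mu>^2 * b) = of_real p * K b"
proof -
  have "gmat 1 (\<mu>^2 * b) ** gmat \<mu> 0 = gmat \<mu> 0 ** gmat 1 b"
    using gmat_mult[of 1 \<mu> "\<mu>^2 * b" 0] gmat_mult[of \<mu> 1 0 b] \<mu> by (simp add: power2_eq_square)
  moreover have "induces (T (\<mu>^2 * b) \<circ> A) (\<rho> (gmat 1 (\<mu>^2 * b) ** gmat \<mu> 0))"
    using induces_comp[OF rep gmat_unipotent_SU11 gmat_SU11 T_UB T_induces A] \<mu> by simp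
  moreover have "induces (A \<circ> T b) (\<rho> (gmat \<mu> 0 ** gmat 1 b))"
    using induces_comp[OF rep gmat_SU11 gmat_unipotent_SU11 A T_UB T_induces] \<mu> by simp
  ultimately obtain s where s: "\<forall>u\<in>Hsp. (T (\<mu>^2 * b) \<circ> A) u = sc s ((A \<circ> T b) u)"
    using induces_proportional[OF UB_comp[OF T_UB A(1)] UB_comp[OF A(1) T_UB]] by metis
  have "sc (of_real p * \<gamma>) \<eta>1 = sc (s * (of_real p * \<gamma>)) \<eta>1"
    using bspec[OF s eta1_Hsp] A(1) T_UB \<gamma>(3) by (simp add: UB_sc eta1_Hsp T_eta1 sc_sc)
  then have "s = 1"
    using sc_cancel[OF _ eta1_neq_zvec] \<gamma>(1,2) by fastforce
  then have conj: "T (\<mu>^2 * b) (A \<eta>2) = A (T b \<eta>2)"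
    using bspec[OF s eta2_Hsp] by (simp add: sc_one)
  have "\<gamma> * K (\<mu>^2 * b) = Bf (T (\<mu>^2 * b) (A \<eta>2)) \<eta>2"
    unfolding \<gamma>(4) using T_UB by (simp add: UB_sc Bf_sc_left UB_Hsp eta2_Hsp Bf_T_eta2_eta2)
  also have "\<dots> = Bf (A (T b \<eta>2)) \<eta>2"
    by (simp only: conj)
  also have "\<dots> = \<gamma> * (of_real p * K b)"
  proof -
    have "cnj \<gamma> * Bf (A (c b)) \<eta>2 = Bf (A (c b)) (A \<eta>2)"
      unfolding \<gamma>(4) using A(1) by (simp add: Bf_sc_right eta2_Hsp UB_Hsp c_Hsp)
    also have "\<dots> = 0"
      using UB_Bf[OF A(1) c_Hsp eta2_Hsp] Bf_c_eta2 by simp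
    finally have "Bf (A (c b)) \<eta>2 = 0"
      using \<gamma>(2) by simp
    then show ?thesis
      unfolding T_eta2 using A(1)
      by (simp add: UB_vadd UB_sc \<gamma>(3,4) frame_simps c_Hsp UB_Hsp mult_ac)
  qed
  finally show ?thesis
    using \<gamma>(2) by simp
qed

end

lemma K_dilation:
  assumes "l > 0" "l \<noteq> 1"
  obtains p where "p = l powr t \<or> p = l powr (- t)" "\<And>b. K (l * b) = of_real p * K b"
proof -
  have \<mu>: "sqrt l > 0" "sqrt l \<noteq> 1" and "(sqrt l)^2 = l"
    using assms by auto
  obtain A \<gamma> p where lift: "A \<in> UB" "induces A (\<rho> (gmat (sqrt l) 0))" "p > 0" "\<gamma> \<noteq> 0"
    "A \<eta>1 = sc (of_real p * \<gamma>) \<eta>1" "A \<eta>2 = sc \<gamma> \<eta>2"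
    by (rule diagonal_lift[OF \<mu>])
  have "\<bar>ln p\<bar> = t * \<bar>ln l\<bar>"
    using diagonal_lift_abs_ln_factor[OF \<mu> lift] \<open>(sqrt l)^2 = l\<close> by simp
  then have "ln p = t * ln l \<or> ln p = - t * ln l"
    using t_pos by (auto simp: abs_if split: if_splits)
  moreover have "p = exp (ln p)"
    using lift(3) by simp
  ultimately have "p = l powr t \<or> p = l powr (- t)"
    using assms(1) by (auto simp: powr_def mult.commute)
  moreover have "K (l * b) = of_real p * K b" for b
    using diagonal_lift_conj[OF \<mu> lift] \<open>(sqrt l)^2 = l\<close> by simp
  ultimately show ?thesis
    using that by blast
qed

text \<open>The wrong exponent would make \<open>K\<close> grow under contraction of its argument, which is
incompatible with its continuity at \<open>0\<close>.\<close>

lemma K_eq_0_if_wrong_exponent: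
  assumes "l > 0" "l \<noteq> 1" "\<And>b. K (l * b) = of_real (l powr (- t)) * K b"
  shows "K b = 0"
proof (cases "l < 1")
  case True
  have "l powr t \<le> 1"
    using True assms(1) t_pos by (simp add: powr_le1)
  then have "1 \<le> l powr (- t)"
    using assms(1) by (simp add: powr_minus one_le_inverse)
  moreover have "K (l * b) = l powr (- t) *\<^sub>R K b" for b
    unfolding scaleR_conv_of_real by (rule assms(3))
  ultimately show ?thesis
    using eq_0_if_isCont_and_expanding[OF isCont_K K_zero assms(1) True] by blast
next
  case False
  with assms(2) have "l > 1"
    by simp
  have "K (inverse l * b) = l powr t *\<^sub>R K b" for b
    using assms(3)[of "inverse l * b"] assms(1)
    by (simp add: powr_minus scaleR_conv_of_real field_simps)
  moreover have "1 \<le> l powr t"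
    using \<open>l > 1\<close> t_pos by (simp add: ge_one_powr_ge_zero)
  moreover have "0 < inverse l" "inverse l < 1"
    using \<open>l > 1\<close> by (simp_all add: inverse_less_1_iff)
  ultimately show ?thesis
    using eq_0_if_isCont_and_expanding[OF isCont_K K_zero] by blast
qed

lemma K_homogeneous: "l > 0 \<Longrightarrow> K (l * b) = of_real (l powr t) * K b"
proof (cases "l = 1")
  case False
  assume "l > 0"
  then obtain p where p: "p = l powr t \<or> p = l powr (- t)" "\<And>b. K (l * b) = of_real p * K b"
    using K_dilation[OF _ False] by blast
  show ?thesis
  proof (cases "p = l powr t")
    case True
    with p(2) show ?thesis
      by simp
  next
    case False
    with p have "K (l * b) = of_real (l powr (- t)) * K b" for b
      by simp
    then have "K b = 0" for b
      using K_eq_0_if_wrong_exponent[OF \<open>l > 0\<close> \<open>l \<noteq> 1\<close>] by blast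
    then show ?thesis
      by simp
  qed
qed simp

end

theorem mainTheorem13:
  fixes \<rho> :: "complex^2^2 \<Rightarrow> hvec set \<Rightarrow> hvec set"
    and t :: real
    and \<eta>1 \<eta>2 :: hvec
    and T :: "real \<Rightarrow> hvec \<Rightarrow> hvec"
    and K :: "real \<Rightarrow> complex"
    and c :: "real \<Rightarrow> hvec"
  assumes rep: "is_rep \<rho>"
    and nonel: "non_elementary \<rho>"
    and ell: "ell_is \<rho> t"
    and eta1_H: "\<eta>1 \<in> Hsp" and eta1_nz: "\<eta>1 \<noteq> zvec" and eta1_iso: "Bf \<eta>1 \<eta>1 = 0"
    and eta2_H: "\<eta>2 \<in> Hsp" and eta2_nz: "\<eta>2 \<noteq> zvec" and eta2_iso: "Bf \<eta>2 \<eta>2 = 0"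
    and eta12: "Bf \<eta>1 \<eta>2 = 1"
    and eta1_fix: "\<forall>l b. l \<noteq> 0 \<longrightarrow> fixes_bd (\<rho> (gmat l b)) (cline \<eta>1)"
    and eta1_unique: "\<forall>xi\<in>bd_pts. (\<forall>l b. l \<noteq> 0 \<longrightarrow> fixes_bd (\<rho> (gmat l b)) xi)
                        \<longrightarrow> xi = cline \<eta>1"
    and eta2_axis: "\<forall>l>0. l \<noteq> 1 \<longrightarrow> is_axis (geod \<eta>1 \<eta>2) (\<rho> (gmat l 0))"
    and T_lift: "\<forall>b. T b \<in> UB \<and> induces (T b) (\<rho> (gmat 1 b)) \<and> T b \<eta>1 = \<eta>1"
    and T_eta2: "\<forall>b. T b \<eta>2 = vadd (vadd (sc (K b) \<eta>1) \<eta>2) (c b) \<and> c b \<in> Eperp \<eta>1 \<eta>2"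
  shows "(\<forall>l>0. \<forall>b. K (l * b) = of_real (l powr t) * K b)
       \<and> (\<forall>b. K (- b) = cnj (K b))
       \<and> (\<forall>b d. K (b + d) = K b + K d + Bf (c d) (c (- b)))"
proof -
  \<comment> \<open>Non-elementarity and the uniqueness of \<open>\<eta>1\<close> only serve to define \<open>\<eta>1\<close>, \<open>\<eta>2\<close>.\<close>
  interpret hyperbolic_scaling \<eta>1 \<eta>2 \<rho> T K c t
    by unfold_locales (fact assms)+
  show ?thesis
    using K_homogeneous K_uminus K_add by blast
qed

end
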